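(* Let $k$ be a positive integer and let $\varepsilon>0$. Every finite graph $G$ with treewidth less than $k$ is a minor of some finite graph $\tilde G$ with growth $f_{\tilde G}(r)\leq (162(k+1)+\varepsilon)r+1$ for every positive integer $r$.
   Context: The growth of a finite graph $G$ is the function $f_G\colon\mathbb{N}\to\mathbb{N}$ where $f_G(r)$ is the maximum of $|V(H)|$ over all subgraphs $H$ of $G$ of radius at most $r$. Treewidth is the minimum, over tree-decompositions (bags indexed by the nodes of a tree, each edge contained in some bag, the bags containing any given vertex forming a non-empty subtree), of the maximum bag size minus $1$. A graph $H$ is a minor of $G$ if $H$ is isomorphic to a graph obtained from a subgraph of $G$ by contracting edges. *)

theory Defs
  imports Complex_Main
begin

definition graph :: "'a set \<Rightarrow> 'a set set \<Rightarrow> bool" where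
  "graph V E \<longleftrightarrow> finite V \<and> (\<forall>e\<in>E. \<exists>u v. e = {u, v} \<and> u \<noteq> v \<and> u \<in> V \<and> v \<in> V)"

definition subgraph :: "'a set \<Rightarrow> 'a set set \<Rightarrow> 'a set \<Rightarrow> 'a set set \<Rightarrow> bool" where
  "subgraph V' E' V E \<longleftrightarrow> graph V' E' \<and> V' \<subseteq> V \<and> E' \<subseteq> E"

definition walk :: "'a set \<Rightarrow> 'a set set \<Rightarrow> 'a list \<Rightarrow> bool" where
  "walk V E xs \<longleftrightarrow> xs \<noteq> [] \<and> set xs \<subseteq> V \<and> (\<forall>i. Suc i < length xs \<longrightarrow> {xs ! i, xs ! Suc i} \<in> E)"

definition dist_le :: "'a set \<Rightarrow> 'a set set \<Rightarrow> 'a \<Rightarrow> 'a \<Rightarrow> nat \<Rightarrow> bool" where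
  "dist_le V E u v r \<longleftrightarrow> (\<exists>xs. walk V E xs \<and> hd xs = u \<and> last xs = v \<and> length xs \<le> Suc r)"

definition connected_graph :: "'a set \<Rightarrow> 'a set set \<Rightarrow> bool" where
  "connected_graph V E \<longleftrightarrow> (\<forall>u\<in>V. \<forall>v\<in>V. \<exists>xs. walk V E xs \<and> hd xs = u \<and> last xs = v)"

definition radius_le :: "'a set \<Rightarrow> 'a set set \<Rightarrow> nat \<Rightarrow> bool" where
  "radius_le V E r \<longleftrightarrow> (\<exists>c\<in>V. \<forall>v\<in>V. dist_le V E c v r)"

definition growth :: "'a set \<Rightarrow> 'a set set \<Rightarrow> nat \<Rightarrow> nat" where
  "growth V E r = Max ({card V' | V' E'. subgraph V' E' V E \<and> radius_le V' E' r} \<union> {0})"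

definition tree :: "'b set \<Rightarrow> 'b set set \<Rightarrow> bool" where
  "tree I F \<longleftrightarrow> graph I F \<and> connected_graph I F \<and> card F + 1 = card I"

definition tree_decomposition ::
  "'a set \<Rightarrow> 'a set set \<Rightarrow> nat set \<Rightarrow> nat set set \<Rightarrow> (nat \<Rightarrow> 'a set) \<Rightarrow> bool" where
  "tree_decomposition V E I F B \<longleftrightarrow>
     tree I F \<and> (\<forall>i\<in>I. B i \<subseteq> V) \<and> (\<forall>e\<in>E. \<exists>i\<in>I. e \<subseteq> B i) \<and>
     (\<forall>v\<in>V. {i\<in>I. v \<in> B i} \<noteq> {} \<and>
        connected_graph {i\<in>I. v \<in> B i} {f\<in>F. f \<subseteq> {i\<in>I. v \<in> B i}})"

definition treewidth :: "'a set \<Rightarrow> 'a set set \<Rightarrow> int" where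
  "treewidth V E = int (LEAST w. \<exists>I F B. tree_decomposition V E I F B \<and> (\<forall>i\<in>I. card (B i) \<le> w)) - 1"

definition contract :: "'a set \<times> 'a set set \<Rightarrow> 'a \<Rightarrow> 'a \<Rightarrow> 'a set \<times> 'a set set" where
  "contract G u v = (fst G - {v},
     {e \<in> snd G. v \<notin> e} \<union> {{u, w} | w. {v, w} \<in> snd G \<and> w \<noteq> u})"

definition contract_step :: "'a set \<times> 'a set set \<Rightarrow> 'a set \<times> 'a set set \<Rightarrow> bool" where
  "contract_step G G' \<longleftrightarrow> (\<exists>u v. {u, v} \<in> snd G \<and> u \<noteq> v \<and> G' = contract G u v)"

definition isomorphic :: "'a set \<Rightarrow> 'a set set \<Rightarrow> 'b set \<Rightarrow> 'b set set \<Rightarrow> bool" where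
  "isomorphic V E V' E' \<longleftrightarrow> (\<exists>f. bij_betw f V V' \<and>
     (\<forall>u\<in>V. \<forall>v\<in>V. {u, v} \<in> E \<longleftrightarrow> {f u, f v} \<in> E'))"

definition minor :: "'a set \<Rightarrow> 'a set set \<Rightarrow> 'b set \<Rightarrow> 'b set set \<Rightarrow> bool" where
  "minor VH EH VG EG \<longleftrightarrow> (\<exists>V' E' G''. subgraph V' E' VG EG \<and>
     contract_step\<^sup>*\<^sup>* (V', E') G'' \<and> isomorphic VH EH (fst G'') (snd G''))"

end

(* Fix a tree decomposition of G with bags of size at most k and root its tree anywhere. Replace
   every node t of the tree by a path, the spine of t, and hang the spines of the children of t
   off the spine of t at positions spaced by the size of a whole child subtree; the spines get
   longer with the height of t so that all children fit. In the resulting tree every ball of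
   radius r lies among the descendants, at most 2 r steps down, of the r-th ancestor of its
   centre, and the spacing makes such a set have at most 10 r + 2 vertices. The strong product of
   this tree with K_k therefore has growth at most k (10 r + 2). It contains G as a minor: the
   branch set of v consists of the spines of all nodes whose bag contains v, each taken in the
   copy indexed by the position of v in that bag; it is connected because these nodes form a
   subtree. *)

theory Submission
  imports Defs "HOL-Library.Countable"
begin

section \<open>Connectivity within a vertex set\<close>

lemma graph_edgeD: "graph W F \<Longrightarrow> {p, q} \<in> F \<Longrightarrow> p \<noteq> q \<and> p \<in> W \<and> q \<in> W"
  unfolding graph_def by (metis doubleton_eq_iff)

lemma walk_Cons_Cons:
  "walk W F (x # y # xs) \<longleftrightarrow> x \<in> W \<and> {x, y} \<in> F \<and> walk W F (y # xs)"
  unfolding walk_def by (auto simp: less_Suc_eq_0_disj)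

lemma walk_mono: "walk W' F' xs \<Longrightarrow> W' \<subseteq> W \<Longrightarrow> F' \<subseteq> F \<Longrightarrow> walk W F xs"
  unfolding walk_def by blast

definition adj_within :: "'b set \<Rightarrow> 'b set set \<Rightarrow> 'b \<Rightarrow> 'b \<Rightarrow> bool" where
  "adj_within X F p q \<longleftrightarrow> p \<in> X \<and> q \<in> X \<and> {p, q} \<in> F"

definition connected_within :: "'b set \<Rightarrow> 'b set set \<Rightarrow> bool" where
  "connected_within X F \<longleftrightarrow> (\<forall>x\<in>X. \<forall>y\<in>X. (adj_within X F)\<^sup>*\<^sup>* x y)"

lemma symp_adj_within: "symp (adj_within X F)"
  by (auto simp: symp_def adj_within_def insert_commute)

lemma rtranclp_map_steps:
  assumes "\<And>x y. R x y \<Longrightarrow> S\<^sup>*\<^sup>* (f x) (f y)" and "R\<^sup>*\<^sup>* x y"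
  shows "S\<^sup>*\<^sup>* (f x) (f y)"
  using assms(2) by induction (auto intro: rtranclp_trans assms(1))

lemma walk_rtranclp_adj_within: "walk W F xs \<Longrightarrow> (adj_within W F)\<^sup>*\<^sup>* (hd xs) (last xs)"
proof (induction xs rule: induct_list012)
  case (3 x y xs)
  then have w: "walk W F (y # xs)" and "adj_within W F x y"
    by (auto simp: walk_Cons_Cons adj_within_def walk_def)
  with "3.IH"(2)[OF w] show ?case by (simp add: converse_rtranclp_into_rtranclp)
qed (auto simp: walk_def)

lemma connected_within_if_connected_graph:
  "connected_graph X F \<Longrightarrow> connected_within X F"
  unfolding connected_graph_def connected_within_def by (metis walk_rtranclp_adj_within)

section \<open>Minor models\<close>

definition map_edges :: "('b \<Rightarrow> 'c) \<Rightarrow> 'b set set \<Rightarrow> 'c set set" where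
  "map_edges f F = {{f p, f q} | p q. {p, q} \<in> F \<and> f p \<noteq> f q}"

lemma map_edgesI: "{p, q} \<in> F \<Longrightarrow> f p \<noteq> f q \<Longrightarrow> {f p, f q} \<in> map_edges f F"
  unfolding map_edges_def by blast

lemma graph_map_edges:
  assumes "graph W F"
  shows "graph (f ` W) (map_edges f F)"
proof -
  have "\<exists>u v. e = {u, v} \<and> u \<noteq> v \<and> u \<in> f ` W \<and> v \<in> f ` W" if "e \<in> map_edges f F" for e
    using that graph_edgeD[OF assms] unfolding map_edges_def by blast
  then show ?thesis using assms by (simp add: graph_def)
qed

lemma connected_within_map_edges:
  assumes "connected_within X F"
  shows "connected_within (f ` X) (map_edges f F)"
  unfolding connected_within_def
proof (intro ballI)
  fix x' y' assume "x' \<in> f ` X" "y' \<in> f ` X"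
  then obtain x y where xy: "x \<in> X" "y \<in> X" "x' = f x" "y' = f y" by blast
  have step: "(adj_within (f ` X) (map_edges f F))\<^sup>*\<^sup>* (f p) (f q)" if "adj_within X F p q" for p q
    using that map_edgesI[of p q F f]
    by (cases "f p = f q") (auto simp: adj_within_def intro: r_into_rtranclp)
  have "(adj_within X F)\<^sup>*\<^sup>* x y" using assms xy by (simp add: connected_within_def)
  from rtranclp_map_steps[of "adj_within X F", OF step this]
  show "(adj_within (f ` X) (map_edges f F))\<^sup>*\<^sup>* x' y'" using xy by simp
qed

definition minor_model ::
  "'a set \<Rightarrow> 'a set set \<Rightarrow> 'b set \<Rightarrow> 'b set set \<Rightarrow> ('a \<Rightarrow> 'b set) \<Rightarrow> bool" where
  "minor_model V E W F X \<longleftrightarrow>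
     (\<forall>v\<in>V. X v \<noteq> {} \<and> X v \<subseteq> W \<and> connected_within (X v) F) \<and>
     (\<forall>u\<in>V. \<forall>v\<in>V. u \<noteq> v \<longrightarrow> X u \<inter> X v = {}) \<and>
     (\<forall>u v. {u, v} \<in> E \<longrightarrow> (\<exists>p\<in>X u. \<exists>q\<in>X v. {p, q} \<in> F))"

definition exact_model ::
  "'a set \<Rightarrow> 'a set set \<Rightarrow> 'b set \<Rightarrow> 'b set set \<Rightarrow> ('a \<Rightarrow> 'b set) \<Rightarrow> bool" where
  "exact_model V E W F X \<longleftrightarrow> graph W F \<and> \<Union>(X ` V) = W \<and>
     (\<forall>v\<in>V. X v \<noteq> {} \<and> connected_within (X v) F) \<and>
     (\<forall>u\<in>V. \<forall>v\<in>V. u \<noteq> v \<longrightarrow> X u \<inter> X v = {}) \<and>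
     (\<forall>u\<in>V. \<forall>v\<in>V. u \<noteq> v \<longrightarrow> ((\<exists>p\<in>X u. \<exists>q\<in>X v. {p, q} \<in> F) \<longleftrightarrow> {u, v} \<in> E))"

lemma map_edges_between_iff:
  assumes gr: "graph W F"
    and saturated: "\<And>X p q. X \<in> {P, Q} \<Longrightarrow> p \<in> X \<Longrightarrow> q \<in> W \<Longrightarrow> f p = f q \<Longrightarrow> q \<in> X"
    and separated: "f ` P \<inter> f ` Q = {}"
  shows "(\<exists>p'\<in>f ` P. \<exists>q'\<in>f ` Q. {p', q'} \<in> map_edges f F) \<longleftrightarrow> (\<exists>p\<in>P. \<exists>q\<in>Q. {p, q} \<in> F)"
proof
  assume "\<exists>p'\<in>f ` P. \<exists>q'\<in>f ` Q. {p', q'} \<in> map_edges f F"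
  then obtain p0 q0 p q where pq0: "p0 \<in> P" "q0 \<in> Q" and e: "{p, q} \<in> F"
    and eq: "{f p0, f q0} = {f p, f q}"
    unfolding map_edges_def by blast
  have W: "p \<in> W" "q \<in> W" using graph_edgeD[OF gr e] by auto
  from eq consider "f p0 = f p" "f q0 = f q" | "f p0 = f q" "f q0 = f p"
    by (auto simp: doubleton_eq_iff)
  then show "\<exists>p\<in>P. \<exists>q\<in>Q. {p, q} \<in> F"
  proof cases
    case 1
    then have "p \<in> P" "q \<in> Q" using saturated pq0 W by (metis insertCI)+
    then show ?thesis using e by blast
  next
    case 2
    then have "q \<in> P" "p \<in> Q" using saturated pq0 W by (metis insertCI)+
    moreover have "{q, p} \<in> F" using e by (simp add: insert_commute)
    ultimately show ?thesis by blast
  qed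
next
  assume "\<exists>p\<in>P. \<exists>q\<in>Q. {p, q} \<in> F"
  then obtain p q where pq: "p \<in> P" "q \<in> Q" "{p, q} \<in> F" by blast
  then have "{f p, f q} \<in> map_edges f F" using separated by (blast intro: map_edgesI)
  with pq show "\<exists>p'\<in>f ` P. \<exists>q'\<in>f ` Q. {p', q'} \<in> map_edges f F" by blast
qed

lemma exact_model_map_edges:
  assumes model: "exact_model V E W F X"
    and saturated: "\<And>v p q. v \<in> V \<Longrightarrow> p \<in> X v \<Longrightarrow> q \<in> W \<Longrightarrow> f p = f q \<Longrightarrow> q \<in> X v"
  shows "exact_model V E (f ` W) (map_edges f F) (\<lambda>v. f ` X v)"
proof -
  have gr: "graph W F" and W: "\<Union>(X ` V) = W"
    and disj: "\<And>u v. u \<in> V \<Longrightarrow> v \<in> V \<Longrightarrow> u \<noteq> v \<Longrightarrow> X u \<inter> X v = {}"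
    using model by (auto simp: exact_model_def)
  have separated: "f ` X u \<inter> f ` X v = {}" if uv: "u \<in> V" "v \<in> V" "u \<noteq> v" for u v
  proof -
    have "f p \<noteq> f q" if p: "p \<in> X u" and q: "q \<in> X v" for p q
    proof
      assume "f p = f q"
      moreover have "q \<in> W" using W uv(2) q by blast
      ultimately have "q \<in> X u" using saturated[OF uv(1) p] by blast
      then show False using disj[OF uv] q by blast
    qed
    then show ?thesis by fastforce
  qed
  have "(\<exists>p\<in>f ` X u. \<exists>q\<in>f ` X v. {p, q} \<in> map_edges f F) \<longleftrightarrow> {u, v} \<in> E"
    if uv: "u \<in> V" "v \<in> V" "u \<noteq> v" for u v
  proof -
    have "(\<exists>p\<in>f ` X u. \<exists>q\<in>f ` X v. {p, q} \<in> map_edges f F) \<longleftrightarrow> (\<exists>p\<in>X u. \<exists>q\<in>X v. {p, q} \<in> F)"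
      by (rule map_edges_between_iff[OF gr _ separated[OF uv]]) (use saturated uv in blast)
    also have "\<dots> \<longleftrightarrow> {u, v} \<in> E" using model uv by (simp add: exact_model_def)
    finally show ?thesis .
  qed
  moreover have "\<forall>v\<in>V. f ` X v \<noteq> {} \<and> connected_within (f ` X v) (map_edges f F)"
    using model by (simp add: exact_model_def connected_within_map_edges)
  ultimately show ?thesis
    unfolding exact_model_def using graph_map_edges[OF gr] W separated by blast
qed

lemma contract_eq_map_edges:
  assumes gr: "graph W F" and ab: "{a, b} \<in> F"
  defines "h \<equiv> \<lambda>z. if z = b then a else z"
  shows "contract (W, F) a b = (h ` W, map_edges h F)"
proof -
  have abW: "a \<noteq> b" "a \<in> W" using graph_edgeD[OF gr ab] by auto
  have "W - {b} = h ` W" using abW by (auto simp: h_def)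
  moreover have "{e \<in> F. b \<notin> e} \<union> {{a, w} | w. {b, w} \<in> F \<and> w \<noteq> a} = map_edges h F"
  proof (intro equalityI subsetI)
    fix e assume "e \<in> {e \<in> F. b \<notin> e} \<union> {{a, w} | w. {b, w} \<in> F \<and> w \<noteq> a}"
    then consider "e \<in> F" "b \<notin> e" | w where "e = {a, w}" "{b, w} \<in> F" "w \<noteq> a" by blast
    then show "e \<in> map_edges h F"
    proof cases
      case 1
      then obtain p q where "e = {p, q}" "p \<noteq> q" using gr unfolding graph_def by blast
      with 1 show ?thesis using map_edgesI[of p q F h] by (auto simp: h_def)
    next
      case 2
      then have "w \<noteq> b" using graph_edgeD[OF gr] by blast
      with 2 show ?thesis using map_edgesI[of b w F h] by (auto simp: h_def)
    qed
  next
    fix e assume "e \<in> map_edges h F"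
    then obtain p q where e: "e = {h p, h q}" "{p, q} \<in> F" "h p \<noteq> h q"
      by (auto simp: map_edges_def)
    have "p \<noteq> q" using graph_edgeD[OF gr e(2)] by blast
    then consider "p = b" | "q = b" | "p \<noteq> b" "q \<noteq> b" by blast
    then show "e \<in> {e \<in> F. b \<notin> e} \<union> {{a, w} | w. {b, w} \<in> F \<and> w \<noteq> a}"
    proof cases
      case 1
      then show ?thesis using e \<open>p \<noteq> q\<close> by (auto simp: h_def split: if_splits)
    next
      case 2
      then have "{b, p} \<in> F" using e(2) by (simp add: insert_commute)
      then show ?thesis using e 2 \<open>p \<noteq> q\<close> by (auto simp: h_def insert_commute split: if_splits)
    qed (use e in \<open>auto simp: h_def\<close>)
  qed
  ultimately show ?thesis by (simp add: contract_def)
qed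

lemma exact_model_singletons_isomorphic:
  assumes gV: "graph V E" and model: "exact_model V E W F X"
    and singletons: "\<And>v a b. v \<in> V \<Longrightarrow> a \<in> X v \<Longrightarrow> b \<in> X v \<Longrightarrow> a = b"
  shows "isomorphic V E W F"
proof -
  define g where "g v = (SOME a. a \<in> X v)" for v
  have gr: "graph W F" and cov: "\<Union>(X ` V) = W"
    and disj: "\<And>u v. u \<in> V \<Longrightarrow> v \<in> V \<Longrightarrow> u \<noteq> v \<Longrightarrow> X u \<inter> X v = {}"
    using model by (auto simp: exact_model_def)
  have Xg: "X v = {g v}" if "v \<in> V" for v
  proof -
    have "X v \<noteq> {}" using model that by (simp add: exact_model_def)
    then have "g v \<in> X v" unfolding g_def by (simp add: some_in_eq)
    then show ?thesis using singletons that by blast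
  qed
  have "bij_betw g V W"
    unfolding bij_betw_def inj_on_def using disj Xg cov by fastforce
  moreover have "{u, v} \<in> E \<longleftrightarrow> {g u, g v} \<in> F" if u: "u \<in> V" and v: "v \<in> V" for u v
  proof (cases "u = v")
    case True
    then show ?thesis using graph_edgeD[OF gV, of u u] graph_edgeD[OF gr, of "g u" "g u"] by auto
  next
    case False
    then have "(\<exists>p\<in>X u. \<exists>q\<in>X v. {p, q} \<in> F) \<longleftrightarrow> {u, v} \<in> E"
      using model u v by (simp add: exact_model_def)
    then show ?thesis using Xg[OF u] Xg[OF v] by simp
  qed
  ultimately show ?thesis unfolding isomorphic_def by blast
qed

lemma exact_model_contract_step:
  assumes model: "exact_model V E W F X" and v: "v \<in> V"
    and ac: "a \<in> X v" "c \<in> X v" "{a, c} \<in> F"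
  defines "h \<equiv> \<lambda>z. if z = c then a else z"
  shows "contract_step (W, F) (h ` W, map_edges h F)"
    and "exact_model V E (h ` W) (map_edges h F) (\<lambda>u. h ` X u)"
    and "card (h ` W) < card W"
proof -
  have gr: "graph W F" and cov: "\<Union>(X ` V) = W"
    and disj: "\<And>u v. u \<in> V \<Longrightarrow> v \<in> V \<Longrightarrow> u \<noteq> v \<Longrightarrow> X u \<inter> X v = {}"
    using model by (auto simp: exact_model_def)
  have acW: "a \<noteq> c" "c \<in> W" using graph_edgeD[OF gr ac(3)] by auto
  have "contract (W, F) a c = (h ` W, map_edges h F)"
    unfolding h_def by (rule contract_eq_map_edges[OF gr ac(3)])
  then show "contract_step (W, F) (h ` W, map_edges h F)"
    unfolding contract_step_def using ac(3) acW by (intro exI[of _ a] exI[of _ c]) simp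
  have "q \<in> X u" if "u \<in> V" "p \<in> X u" "q \<in> W" "h p = h q" for u p q
  proof (cases "p = q")
    case False
    then have "p \<in> {a, c}" "q \<in> {a, c}" using that(4) by (auto simp: h_def split: if_splits)
    then have "u = v" using disj[OF that(1) v] that(2) ac by blast
    then show ?thesis using \<open>q \<in> {a, c}\<close> ac by blast
  qed (use that in simp)
  then show "exact_model V E (h ` W) (map_edges h F) (\<lambda>u. h ` X u)"
    by (rule exact_model_map_edges[OF model])
  have fin: "finite W" using gr by (simp add: graph_def)
  have "h ` W \<subseteq> W - {c}" using acW ac cov v by (auto simp: h_def)
  then have "card (h ` W) \<le> card (W - {c})" using fin by (simp add: card_mono)
  also have "\<dots> < card W" using card_Diff1_less[OF fin acW(2)] .
  finally show "card (h ` W) < card W" .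
qed

lemma exact_model_minor:
  assumes gV: "graph V E" and model: "exact_model V E W F X"
  shows "\<exists>G. contract_step\<^sup>*\<^sup>* (W, F) G \<and> isomorphic V E (fst G) (snd G)"
  using model
proof (induction "card W" arbitrary: W F X rule: less_induct)
  case less
  show ?case
  proof (cases "\<exists>v\<in>V. \<exists>a b. a \<in> X v \<and> b \<in> X v \<and> a \<noteq> b")
    case True
    then obtain v a b where v: "v \<in> V" and ab: "a \<in> X v" "b \<in> X v" "a \<noteq> b" by blast
    have "(adj_within (X v) F)\<^sup>*\<^sup>* a b"
      using less.prems v ab by (simp add: exact_model_def connected_within_def)
    then obtain c where "adj_within (X v) F a c"
      using ab(3) by (cases rule: converse_rtranclpE) auto
    then have ac: "c \<in> X v" "{a, c} \<in> F" by (auto simp: adj_within_def)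
    let ?h = "\<lambda>z. if z = c then a else z"
    note contracted = exact_model_contract_step[OF less.prems v ab(1) ac]
    from less.hyps[OF contracted(3,2)] obtain G where
      "contract_step\<^sup>*\<^sup>* (?h ` W, map_edges ?h F) G" "isomorphic V E (fst G) (snd G)"
      by blast
    then show ?thesis using contracted(1) by (meson converse_rtranclp_into_rtranclp)
  next
    case False
    then have "isomorphic V E W F"
      using exact_model_singletons_isomorphic[OF gV less.prems] by blast
    then show ?thesis by (intro exI[of _ "(W, F)"]) simp
  qed
qed

lemma exact_model_in_subgraph:
  assumes gW: "graph W F" and model: "minor_model V E W F X"
  defines "F' \<equiv> {{p, q} | p q u v. {p, q} \<in> F \<and> u \<in> V \<and> v \<in> V \<and> p \<in> X u \<and> q \<in> X v \<and>
                                  (u = v \<or> {u, v} \<in> E)}"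
  shows "subgraph (\<Union>(X ` V)) F' W F" and "exact_model V E (\<Union>(X ` V)) F' X"
proof -
  have ne: "\<And>v. v \<in> V \<Longrightarrow> X v \<noteq> {} \<and> X v \<subseteq> W"
    and conn: "\<And>v. v \<in> V \<Longrightarrow> connected_within (X v) F"
    and disj: "\<And>u v. u \<in> V \<Longrightarrow> v \<in> V \<Longrightarrow> u \<noteq> v \<Longrightarrow> X u \<inter> X v = {}"
    and ed: "\<And>u v. {u, v} \<in> E \<Longrightarrow> \<exists>p\<in>X u. \<exists>q\<in>X v. {p, q} \<in> F"
    using model by (auto simp: minor_model_def)
  have F'I: "{p, q} \<in> F'"
    if "{p, q} \<in> F" "u \<in> V" "v \<in> V" "p \<in> X u" "q \<in> X v" "u = v \<or> {u, v} \<in> E" for p q u v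
    using that unfolding F'_def by blast
  have "\<Union>(X ` V) \<subseteq> W" "F' \<subseteq> F" using ne by (auto simp: F'_def)
  moreover have "finite W" using gW by (simp add: graph_def)
  moreover have "\<exists>p q. e = {p, q} \<and> p \<noteq> q \<and> p \<in> \<Union>(X ` V) \<and> q \<in> \<Union>(X ` V)" if "e \<in> F'" for e
  proof -
    obtain p q u v where "e = {p, q}" "{p, q} \<in> F" "u \<in> V" "v \<in> V" "p \<in> X u" "q \<in> X v"
      using \<open>e \<in> F'\<close> unfolding F'_def by blast
    then show ?thesis using graph_edgeD[OF gW] by blast
  qed
  ultimately show sub: "subgraph (\<Union>(X ` V)) F' W F"
    by (auto simp: subgraph_def graph_def intro: finite_subset)
  show "exact_model V E (\<Union>(X ` V)) F' X"
    unfolding exact_model_def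
  proof (intro conjI ballI impI refl)
    show "graph (\<Union>(X ` V)) F'" using sub by (simp add: subgraph_def)
  next
    fix v assume v: "v \<in> V"
    show "X v \<noteq> {}" using ne v by blast
    have "adj_within (X v) F \<le> adj_within (X v) F'"
      using F'I v by (auto simp: adj_within_def)
    then have "(adj_within (X v) F)\<^sup>*\<^sup>* \<le> (adj_within (X v) F')\<^sup>*\<^sup>*" by (rule rtranclp_mono)
    then show "connected_within (X v) F'"
      using conn[OF v] unfolding connected_within_def le_fun_def le_bool_def by blast
  next
    fix u v assume u: "u \<in> V" and v: "v \<in> V" and uv: "u \<noteq> v"
    show "X u \<inter> X v = {}" using disj u v uv .
    show "(\<exists>p\<in>X u. \<exists>q\<in>X v. {p, q} \<in> F') \<longleftrightarrow> {u, v} \<in> E"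
    proof
      assume "\<exists>p\<in>X u. \<exists>q\<in>X v. {p, q} \<in> F'"
      then obtain p q p' q' u' v' where pq: "p \<in> X u" "q \<in> X v" "{p, q} = {p', q'}"
        and uv': "u' \<in> V" "v' \<in> V" "p' \<in> X u'" "q' \<in> X v'" "u' = v' \<or> {u', v'} \<in> E"
        unfolding F'_def by blast
      have same_set: "w = w'" if "w \<in> V" "w' \<in> V" "x \<in> X w" "x \<in> X w'" for w w' x
        using disj that by blast
      from pq(3) consider "p = p'" "q = q'" | "p = q'" "q = p'" by (auto simp: doubleton_eq_iff)
      then have "u = u' \<and> v = v' \<or> u = v' \<and> v = u'"
        by cases (metis same_set u v uv' pq(1,2))+
      with uv uv'(5) show "{u, v} \<in> E" by (auto simp: insert_commute)
    next
      assume "{u, v} \<in> E"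
      then obtain p q where "p \<in> X u" "q \<in> X v" "{p, q} \<in> F" using ed by blast
      then show "\<exists>p\<in>X u. \<exists>q\<in>X v. {p, q} \<in> F'" using F'I u v \<open>{u, v} \<in> E\<close> by blast
    qed
  qed
qed

lemma minor_if_minor_model:
  assumes "graph V E" "graph W F" "minor_model V E W F X"
  shows "minor V E W F"
  using exact_model_in_subgraph[OF assms(2,3)] exact_model_minor[OF assms(1)]
  unfolding minor_def by blast

lemma minor_model_map_edges:
  assumes gW: "graph W F" and inj: "inj_on f W" and model: "minor_model V E W F X"
  shows "minor_model V E (f ` W) (map_edges f F) (\<lambda>v. f ` X v)"
proof -
  have sub: "\<And>v. v \<in> V \<Longrightarrow> X v \<subseteq> W" using model by (simp add: minor_model_def)
  have "\<forall>v\<in>V. f ` X v \<noteq> {} \<and> f ` X v \<subseteq> f ` W \<and> connected_within (f ` X v) (map_edges f F)"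
    using model by (auto simp: minor_model_def connected_within_map_edges)
  moreover have "f ` X u \<inter> f ` X v = {}" if "u \<in> V" "v \<in> V" "u \<noteq> v" for u v
  proof -
    have "f ` X u \<inter> f ` X v = f ` (X u \<inter> X v)"
      using inj_on_image_Int[OF inj sub sub] that by simp
    then show ?thesis using model that by (simp add: minor_model_def)
  qed
  moreover have "\<exists>p\<in>f ` X u. \<exists>q\<in>f ` X v. {p, q} \<in> map_edges f F" if uv: "{u, v} \<in> E" for u v
  proof -
    obtain p q where pq: "p \<in> X u" "q \<in> X v" "{p, q} \<in> F"
      using model uv unfolding minor_model_def by blast
    then have "{f p, f q} \<in> map_edges f F"
      using graph_edgeD[OF gW pq(3)] inj by (auto intro: map_edgesI dest: inj_onD)
    then show ?thesis using pq by blast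
  qed
  ultimately show ?thesis unfolding minor_model_def by blast
qed

section \<open>Growth\<close>

lemma dist_le_in_vertices: "dist_le W F c v r \<Longrightarrow> v \<in> W"
  unfolding dist_le_def walk_def by auto

lemma growth_le:
  assumes gW: "graph W F" and balls: "\<And>c. c \<in> W \<Longrightarrow> card {v. dist_le W F c v r} \<le> b"
  shows "growth W F r \<le> b"
proof -
  have finW: "finite W" using gW by (simp add: graph_def)
  have "card W' \<le> b" if sg: "subgraph W' F' W F" and rad: "radius_le W' F' r" for W' F'
  proof -
    obtain c where c: "c \<in> W'" "\<forall>v\<in>W'. dist_le W' F' c v r"
      using rad by (auto simp: radius_le_def)
    have sub: "W' \<subseteq> W" "F' \<subseteq> F" using sg by (auto simp: subgraph_def)
    have "W' \<subseteq> {v. dist_le W F c v r}"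
      using c sub walk_mono unfolding dist_le_def by blast
    moreover have "finite {v. dist_le W F c v r}"
      using finW dist_le_in_vertices by (metis mem_Collect_eq rev_finite_subset subsetI)
    ultimately have "card W' \<le> card {v. dist_le W F c v r}" by (rule card_mono[rotated])
    also have "\<dots> \<le> b" using balls c(1) sub(1) by blast
    finally show ?thesis .
  qed
  moreover have "finite {card W' | W' F'. subgraph W' F' W F \<and> radius_le W' F' r}"
  proof -
    have "{card W' | W' F'. subgraph W' F' W F \<and> radius_le W' F' r} \<subseteq> card ` Pow W"
      by (auto simp: subgraph_def)
    then show ?thesis using finW by (meson finite_Pow_iff finite_imageI finite_subset)
  qed
  ultimately show ?thesis unfolding growth_def by auto
qed

lemma dist_le_map_edges:
  assumes gW: "graph W F" and inj: "inj_on f W" and c: "c \<in> W"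
    and dist: "dist_le (f ` W) (map_edges f F) (f c) w r"
  shows "w \<in> f ` {v. dist_le W F c v r}"
proof -
  define g where "g = inv_into W f"
  obtain ys where ys: "walk (f ` W) (map_edges f F) ys" "hd ys = f c" "last ys = w"
    "length ys \<le> Suc r"
    using dist by (auto simp: dist_le_def)
  have gf: "g (f p) = p" if "p \<in> W" for p using inj that by (simp add: g_def)
  have "walk W F (map g ys)"
    unfolding walk_def
  proof (intro conjI allI impI)
    show "map g ys \<noteq> []" "set (map g ys) \<subseteq> W"
      using ys(1) by (auto simp: walk_def g_def inv_into_into)
    fix i assume i: "Suc i < length (map g ys)"
    then have "{ys ! i, ys ! Suc i} \<in> map_edges f F" using ys(1) by (simp add: walk_def)
    then obtain p q where pq: "{ys ! i, ys ! Suc i} = {f p, f q}" "{p, q} \<in> F"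
      unfolding map_edges_def by blast
    have "p \<in> W" "q \<in> W" using graph_edgeD[OF gW pq(2)] by auto
    moreover have "ys ! i = f p \<and> ys ! Suc i = f q \<or> ys ! i = f q \<and> ys ! Suc i = f p"
      using pq(1) by (simp add: doubleton_eq_iff)
    ultimately have "{g (ys ! i), g (ys ! Suc i)} = {p, q}"
      using gf by (auto simp: insert_commute)
    then show "{map g ys ! i, map g ys ! Suc i} \<in> F" using i pq(2) by simp
  qed
  moreover have "ys \<noteq> []" using ys(1) by (simp add: walk_def)
  ultimately have "dist_le W F c (g w) r"
    unfolding dist_le_def using ys gf[OF c] by (auto simp: hd_map last_map)
  moreover have "w = f (g w)"
    using dist_le_in_vertices[OF dist] by (simp add: g_def f_inv_into_f)
  ultimately show ?thesis by blast
qed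

lemma growth_map_edges_le:
  assumes gW: "graph W F" and inj: "inj_on f W"
    and balls: "\<And>c. c \<in> W \<Longrightarrow> card {v. dist_le W F c v r} \<le> b"
  shows "growth (f ` W) (map_edges f F) r \<le> b"
proof (rule growth_le[OF graph_map_edges[OF gW]])
  fix c' assume "c' \<in> f ` W"
  then obtain c where c: "c \<in> W" "c' = f c" by blast
  have fin: "finite {v. dist_le W F c v r}"
    using gW dist_le_in_vertices by (metis graph_def mem_Collect_eq rev_finite_subset subsetI)
  have "card {w. dist_le (f ` W) (map_edges f F) c' w r} \<le> card (f ` {v. dist_le W F c v r})"
    using dist_le_map_edges[OF gW inj c(1)] c(2) fin by (intro card_mono) auto
  also have "\<dots> \<le> card {v. dist_le W F c v r}" by (rule card_image_le[OF fin])
  also have "\<dots> \<le> b" by (rule balls[OF c(1)])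
  finally show "card {w. dist_le (f ` W) (map_edges f F) c' w r} \<le> b" .
qed

section \<open>Rooted trees\<close>

locale rooted_tree =
  fixes I :: "'b set" and F :: "'b set set" and root :: 'b
  assumes tree: "tree I F" and root_in: "root \<in> I"
begin

definition depth :: "'b \<Rightarrow> nat" where
  "depth t = (LEAST m. (adj_within I F ^^ m) root t)"

definition parent :: "'b \<Rightarrow> 'b" where
  "parent t = (SOME u. adj_within I F u t \<and> depth u + 1 = depth t)"

definition root_path :: "'b \<Rightarrow> 'b list" where
  "root_path t = rev (map (\<lambda>m. (parent ^^ m) t) [0..<depth t])"

lemma graph: "graph I F"
  using tree by (simp add: tree_def)

lemma depth_spec: "t \<in> I \<Longrightarrow> (adj_within I F ^^ depth t) root t"
proof -
  assume t: "t \<in> I"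
  have "connected_within I F" using tree by (simp add: tree_def connected_within_if_connected_graph)
  then have "(adj_within I F)\<^sup>*\<^sup>* root t" using t root_in by (simp add: connected_within_def)
  then have "\<exists>m. (adj_within I F ^^ m) root t" by (simp add: rtranclp_power)
  then show ?thesis unfolding depth_def by (rule LeastI_ex)
qed

lemma depth_le: "(adj_within I F ^^ m) root t \<Longrightarrow> depth t \<le> m"
  unfolding depth_def by (rule Least_le)

lemma depth_root [simp]: "depth root = 0"
  using depth_le[of 0 root] by simp

lemma depth_eq_0D: "t \<in> I \<Longrightarrow> depth t = 0 \<Longrightarrow> t = root"
  using depth_spec[of t] by simp

lemma parent_exists: "t \<in> I \<Longrightarrow> t \<noteq> root \<Longrightarrow> \<exists>u. adj_within I F u t \<and> depth u + 1 = depth t"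
proof -
  assume t: "t \<in> I" "t \<noteq> root"
  then obtain m where m: "depth t = Suc m" using depth_eq_0D by (cases "depth t") auto
  then have "(adj_within I F ^^ Suc m) root t" using depth_spec[OF t(1)] by simp
  then obtain u where u: "(adj_within I F ^^ m) root u" "adj_within I F u t" by (rule relpowp_Suc_E)
  have "u \<in> I" using u(2) by (simp add: adj_within_def)
  then have "(adj_within I F ^^ Suc (depth u)) root t" using relpowp_Suc_I[OF depth_spec u(2)] by simp
  then have "depth t \<le> Suc (depth u)" by (rule depth_le)
  moreover have "depth u \<le> m" using depth_le[OF u(1)] .
  ultimately show ?thesis using u m by (intro exI[of _ u]) simp
qed

lemma parent:
  assumes "t \<in> I" "t \<noteq> root"
  shows "parent t \<in> I \<and> {t, parent t} \<in> F \<and> depth (parent t) + 1 = depth t"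
proof -
  have "adj_within I F (parent t) t \<and> depth (parent t) + 1 = depth t"
    unfolding parent_def by (rule someI_ex[OF parent_exists[OF assms]])
  then show ?thesis by (auto simp: adj_within_def insert_commute)
qed

lemma edge_eq_parent_edge:
  assumes "e \<in> F"
  shows "\<exists>t\<in>I - {root}. e = {t, parent t}"
proof -
  let ?P = "(\<lambda>t. {t, parent t}) ` (I - {root})"
  have finI: "finite I" using graph by (simp add: graph_def)
  have PF: "?P \<subseteq> F" using parent by auto
  have inj: "inj_on (\<lambda>t. {t, parent t}) (I - {root})"
  proof (rule inj_onI)
    fix t t' assume t: "t \<in> I - {root}" and t': "t' \<in> I - {root}" and e: "{t, parent t} = {t', parent t'}"
    show "t = t'"
    proof (rule ccontr)
      assume "t \<noteq> t'"
      then have "t = parent t' \<and> parent t = t'" using e by (auto simp: doubleton_eq_iff)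
      then show False using parent[of t] parent[of t'] t t' by auto
    qed
  qed
  have "F \<subseteq> Pow I" using graph by (auto simp: graph_def)
  then have finF: "finite F" using finI by (meson finite_Pow_iff finite_subset)
  have "card ?P = card (I - {root})" using inj by (rule card_image)
  also have "\<dots> = card F" using tree root_in finI by (auto simp: tree_def)
  finally have "?P = F" using card_subset_eq[OF finF PF] by simp
  then show ?thesis using assms by blast
qed

lemma funpow_parent: "t \<in> I \<Longrightarrow> m \<le> depth t \<Longrightarrow> (parent ^^ m) t \<in> I \<and> depth ((parent ^^ m) t) = depth t - m"
proof (induction m)
  case (Suc m)
  then have "(parent ^^ m) t \<in> I" "depth ((parent ^^ m) t) = depth t - m" by auto
  moreover have "(parent ^^ m) t \<noteq> root" using calculation Suc.prems by auto
  ultimately show ?case using parent[of "(parent ^^ m) t"] Suc.prems by auto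
qed simp

lemma length_root_path [simp]: "length (root_path t) = depth t"
  by (simp add: root_path_def)

lemma set_root_path: "t \<in> I \<Longrightarrow> set (root_path t) \<subseteq> I"
  using funpow_parent by (auto simp: root_path_def)

lemma root_path_parent: "t \<in> I \<Longrightarrow> t \<noteq> root \<Longrightarrow> root_path t = root_path (parent t) @ [t]"
proof -
  assume t: "t \<in> I" "t \<noteq> root"
  have "depth t = Suc (depth (parent t))" using parent[OF t] by simp
  moreover have "[0..<Suc n] = 0 # map Suc [0..<n]" for n by (simp add: map_Suc_upt upt_conv_Cons)
  ultimately show ?thesis by (simp add: root_path_def funpow_Suc_right funpow_swap1)
qed

lemma root_path_inj: "t \<in> I \<Longrightarrow> t' \<in> I \<Longrightarrow> root_path t = root_path t' \<Longrightarrow> t = t'"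
proof -
  assume t: "t \<in> I" and t': "t' \<in> I" and eq: "root_path t = root_path t'"
  then have same_depth: "depth t = depth t'" by (metis length_root_path)
  show "t = t'"
  proof (cases "depth t = 0")
    case True
    then show ?thesis using depth_eq_0D t t' same_depth by metis
  next
    case False
    then have "t \<noteq> root" "t' \<noteq> root" using same_depth by auto
    then show ?thesis using root_path_parent t t' eq by (metis last_snoc)
  qed
qed

end

section \<open>A tree of linear growth\<close>

(* A node (xs, j) is position j on the spine of the tree node with address xs, a word over
   {..<N}; that node has height D - length xs. The spine of child y of a node of height h hangs
   off position attachment h y, and consecutive attachments are child_size h apart, which is
   the size of a whole subtree of height h - 1. *)
locale spine_tree =
  fixes N D :: nat
begin

fun child_size :: "nat \<Rightarrow> nat" where
  "child_size 0 = 0"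
| "child_size (Suc h) = 3 * N * child_size h + 1"

definition spine_length :: "nat \<Rightarrow> nat" where
  "spine_length h = 2 * N * child_size h + 1"

definition attachment :: "nat \<Rightarrow> nat \<Rightarrow> nat" where
  "attachment h y = (N + y) * child_size h + 1"

definition nodes :: "(nat list \<times> nat) set" where
  "nodes = {(xs, j). length xs \<le> D \<and> set xs \<subseteq> {..<N} \<and> j < spine_length (D - length xs)}"

definition up :: "nat list \<times> nat \<Rightarrow> nat list \<times> nat" where
  "up z = (if 0 < snd z then (fst z, snd z - 1) else if fst z = [] then ([], 0)
     else (butlast (fst z), attachment (D - length (fst z) + 1) (last (fst z))))"

definition descendants :: "nat list \<times> nat \<Rightarrow> nat \<Rightarrow> (nat list \<times> nat) set" where
  "descendants a R = {z \<in> nodes. \<exists>j\<le>R. (up ^^ j) z = a}"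

lemma child_size_mono_Suc: "child_size h \<le> child_size (Suc h)"
proof (induction h)
  case (Suc h)
  then have "3 * N * child_size h \<le> 3 * N * child_size (Suc h)" by (rule mult_le_mono2)
  then show ?case by (metis add_le_mono1 child_size.simps(2))
qed simp

lemma child_size_mono: "h \<le> h' \<Longrightarrow> child_size h \<le> child_size h'"
  by (induction h' rule: dec_induct) (auto intro: order_trans[OF _ child_size_mono_Suc] simp del: child_size.simps)

lemma spine_length_mono: "h \<le> h' \<Longrightarrow> spine_length h \<le> spine_length h'"
  unfolding spine_length_def using child_size_mono by simp

lemma finite_nodes: "finite nodes"
proof -
  have "nodes \<subseteq> {xs. set xs \<subseteq> {..<N} \<and> length xs \<le> D} \<times> {..<spine_length D}"
  proof
    fix z assume "z \<in> nodes"
    then show "z \<in> {xs. set xs \<subseteq> {..<N} \<and> length xs \<le> D} \<times> {..<spine_length D}"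
      using spine_length_mono[of "D - length (fst z)" D] by (auto simp: nodes_def)
  qed
  moreover have "finite ({xs. set xs \<subseteq> {..<N} \<and> length xs \<le> D} \<times> {..<spine_length D})"
    using finite_lists_length_le[of "{..<N}" D] by blast
  ultimately show ?thesis by (rule finite_subset)
qed

lemma up_nodes: "z \<in> nodes \<Longrightarrow> up z \<in> nodes"
proof -
  assume z: "z \<in> nodes"
  obtain xs j where zz: "z = (xs, j)" by (cases z)
  consider "0 < j" | "j = 0" "xs = []" | "j = 0" "xs \<noteq> []" by blast
  then show ?thesis
  proof cases
    case 3
    define h where "h = D - length xs"
    have len: "length xs \<le> D" and st: "set xs \<subseteq> {..<N}" using z zz by (auto simp: nodes_def)
    have "last xs < N" using st last_in_set[OF 3(2)] by blast
    then have "last xs * child_size (Suc h) < N * child_size (Suc h)"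
      by (rule mult_less_mono1) simp
    then have "attachment (Suc h) (last xs) < spine_length (Suc h)"
      by (simp add: attachment_def spine_length_def algebra_simps del: child_size.simps)
    moreover have "D - length (butlast xs) = Suc h" using len 3(2) h_def by (cases xs rule: rev_cases) auto
    ultimately show ?thesis using 3 z zz len st h_def
      by (auto simp: nodes_def up_def dest: in_set_butlastD)
  qed (use z zz in \<open>auto simp: nodes_def up_def spine_length_def\<close>)
qed

lemma funpow_up_nodes: "z \<in> nodes \<Longrightarrow> (up ^^ m) z \<in> nodes"
  by (induction m) (auto intro: up_nodes)

lemma funpow_up_cases:
  assumes "z \<in> nodes" "(up ^^ m) z = (xs, j0)"
  shows "(fst z = xs \<and> j0 \<le> snd z \<and> snd z \<le> j0 + m) \<or>
    (\<exists>y m'. y < N \<and> j0 \<le> attachment (D - length xs) y \<and>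
       attachment (D - length xs) y - j0 + 1 + m' \<le> m \<and> (up ^^ m') z = (xs @ [y], 0))"
  using assms
proof (induction m arbitrary: z)
  case (Suc m)
  have "(up ^^ m) (up z) = (xs, j0)" using Suc.prems(2) by (simp add: funpow_swap1)
  from Suc.IH[OF up_nodes[OF Suc.prems(1)] this] show ?case
  proof
    assume same_spine: "fst (up z) = xs \<and> j0 \<le> snd (up z) \<and> snd (up z) \<le> j0 + m"
    obtain zs j where zz: "z = (zs, j)" by (cases z)
    consider "0 < j" | "j = 0" "zs = []" | "j = 0" "zs \<noteq> []" by blast
    then show ?case
    proof cases
      case 3
      have len: "length zs \<le> D" and "set zs \<subseteq> {..<N}" using Suc.prems(1) zz by (auto simp: nodes_def)
      then have "last zs < N" using last_in_set[OF 3(2)] by blast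
      moreover have xs: "xs = butlast zs" and
        "j0 \<le> attachment (D - length zs + 1) (last zs)"
        "attachment (D - length zs + 1) (last zs) \<le> j0 + m"
        using same_spine zz 3 by (auto simp: up_def)
      moreover have "D - length xs = D - length zs + 1" using len 3(2) xs by (cases zs rule: rev_cases) auto
      moreover have "zs = xs @ [last zs]" using xs 3(2) by simp
      ultimately show ?thesis using zz 3 by (intro disjI2 exI[of _ "last zs"] exI[of _ 0]) auto
    qed (use same_spine zz in \<open>auto simp: up_def\<close>)
  next
    assume "\<exists>y m'. y < N \<and> j0 \<le> attachment (D - length xs) y \<and>
      attachment (D - length xs) y - j0 + 1 + m' \<le> m \<and> (up ^^ m') (up z) = (xs @ [y], 0)"
    then obtain y m' where "y < N" "j0 \<le> attachment (D - length xs) y"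
      "attachment (D - length xs) y - j0 + 1 + m' \<le> m" "(up ^^ Suc m') z = (xs @ [y], 0)"
      by (auto simp: funpow_swap1)
    then show ?case by (intro disjI2 exI[of _ y] exI[of _ "Suc m'"]) auto
  qed
qed simp

definition children_in_range :: "nat list \<Rightarrow> nat \<Rightarrow> nat \<Rightarrow> nat set" where
  "children_in_range xs j0 R =
     {y. y < N \<and> j0 \<le> attachment (D - length xs) y \<and> attachment (D - length xs) y \<le> j0 + R}"

lemma finite_descendants: "finite (descendants a R)"
  using finite_nodes by (rule rev_finite_subset) (auto simp: descendants_def)

lemma descendants_subset:
  "descendants (xs, j0) R \<subseteq>
     (\<lambda>j. (xs, j)) ` ({j0..j0 + R} \<inter> {..<spine_length (D - length xs)}) \<union>
     (\<Union>y\<in>children_in_range xs j0 R.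
        descendants (xs @ [y], 0) (R - (attachment (D - length xs) y - j0) - 1))"
  (is "_ \<subseteq> ?rhs")
proof
  fix z assume "z \<in> descendants (xs, j0) R"
  then obtain j where j: "j \<le> R" "(up ^^ j) z = (xs, j0)" and z: "z \<in> nodes"
    by (auto simp: descendants_def)
  from funpow_up_cases[OF z j(2)] show "z \<in> ?rhs"
  proof
    assume "fst z = xs \<and> j0 \<le> snd z \<and> snd z \<le> j0 + j"
    then show ?thesis using z j(1) by (cases z) (auto simp: nodes_def)
  next
    assume "\<exists>y m'. y < N \<and> j0 \<le> attachment (D - length xs) y \<and>
      attachment (D - length xs) y - j0 + 1 + m' \<le> j \<and> (up ^^ m') z = (xs @ [y], 0)"
    then obtain y m' where "y < N" "j0 \<le> attachment (D - length xs) y"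
      "attachment (D - length xs) y - j0 + 1 + m' \<le> j" "(up ^^ m') z = (xs @ [y], 0)"
      by blast
    then show ?thesis using z j(1) unfolding descendants_def children_in_range_def
      by (intro UnI2 UN_I[of y]) (auto intro!: exI[of _ m'])
  qed
qed

lemma card_descendants_le_sum:
  "card (descendants (xs, j0) R) \<le> min (R + 1) (spine_length (D - length xs)) +
     (\<Sum>y\<in>children_in_range xs j0 R.
        card (descendants (xs @ [y], 0) (R - (attachment (D - length xs) y - j0) - 1)))"
proof -
  let ?J = "{j0..j0 + R} \<inter> {..<spine_length (D - length xs)}"
  let ?C = "\<lambda>y. descendants (xs @ [y], 0) (R - (attachment (D - length xs) y - j0) - 1)"
  have "card (descendants (xs, j0) R) \<le> card ((\<lambda>j. (xs, j)) ` ?J \<union> (\<Union>y\<in>children_in_range xs j0 R. ?C y))"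
    by (rule card_mono[OF _ descendants_subset]) (auto simp: children_in_range_def finite_descendants)
  also have "\<dots> \<le> card ((\<lambda>j. (xs, j)) ` ?J) + card (\<Union>y\<in>children_in_range xs j0 R. ?C y)"
    by (rule card_Un_le)
  also have "card ((\<lambda>j. (xs, j)) ` ?J) \<le> card ?J" by (rule card_image_le) simp
  also have "card ?J \<le> min (R + 1) (spine_length (D - length xs))"
    using card_mono[of "{j0..j0 + R}" ?J] card_mono[of "{..<spine_length (D - length xs)}" ?J] by auto
  also have "card (\<Union>y\<in>children_in_range xs j0 R. ?C y) \<le> (\<Sum>y\<in>children_in_range xs j0 R. card (?C y))"
    by (rule card_UN_le) (simp add: children_in_range_def)
  finally show ?thesis by simp
qed

lemma descendants_empty: "a \<notin> nodes \<Longrightarrow> descendants a R = {}"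
  using funpow_up_nodes by (fastforce simp: descendants_def)

lemma card_children_in_range: "card (children_in_range xs j0 R) \<le> N"
  using card_mono[of "{..<N}" "children_in_range xs j0 R"] by (auto simp: children_in_range_def)

lemma card_descendants_le_child_size:
  "length xs + h = D \<Longrightarrow> card (descendants (xs, j0) R) \<le> child_size (Suc h) \<and>
     (j0 + R \<le> N * child_size h \<longrightarrow> card (descendants (xs, j0) R) \<le> R + 1)"
proof (induction h arbitrary: xs j0 R)
  case 0
  then have "descendants (xs @ [y], 0) R' = {}" for y R'
    by (intro descendants_empty) (auto simp: nodes_def)
  then have "card (descendants (xs, j0) R) \<le> min (R + 1) 1"
    using card_descendants_le_sum[of xs j0 R] 0 by (simp add: spine_length_def)
  then show ?case by auto
next
  case (Suc h)
  have hh: "D - length xs = Suc h" using Suc.prems by simp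
  let ?S = "\<Sum>y\<in>children_in_range xs j0 R.
    card (descendants (xs @ [y], 0) (R - (attachment (Suc h) y - j0) - 1))"
  have "?S \<le> (\<Sum>y\<in>children_in_range xs j0 R. child_size (Suc h))"
    by (rule sum_mono) (use Suc.IH[of "xs @ [_]"] Suc.prems in auto)
  also have "\<dots> \<le> N * child_size (Suc h)"
    using mult_le_mono1[OF card_children_in_range] by (simp del: child_size.simps)
  finally have "card (descendants (xs, j0) R) \<le> spine_length (Suc h) + N * child_size (Suc h)"
    using card_descendants_le_sum[of xs j0 R, unfolded hh]
      min.cobounded2[of "R + 1" "spine_length (Suc h)"] by linarith
  then have "card (descendants (xs, j0) R) \<le> child_size (Suc (Suc h))"
    by (simp add: spine_length_def del: child_size.simps) (simp only: child_size.simps(2)[of "Suc h"])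
  moreover have "card (descendants (xs, j0) R) \<le> R + 1" if "j0 + R \<le> N * child_size (Suc h)"
  proof -
    have "children_in_range xs j0 R = {}"
      using that hh by (auto simp: children_in_range_def attachment_def algebra_simps)
    then show ?thesis using card_descendants_le_sum[of xs j0 R] by simp
  qed
  ultimately show ?case by blast
qed

lemma card_subtree_descendants_le:
  assumes "length xs + h = D"
  shows "card (descendants (xs, 0) R) \<le> min (child_size (Suc h)) (3 * R + 1)"
proof (cases "R \<le> N * child_size h")
  case False
  then have "child_size (Suc h) \<le> 3 * R + 1" by simp
  then show ?thesis using card_descendants_le_child_size[OF assms, of 0 R] by simp
qed (use card_descendants_le_child_size[OF assms, of 0 R] in simp)

(* All children in range but the last one are attached at least child_size (Suc h) apart within
   a window of length R, so their whole subtrees contribute at most R; the last contributes at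
   most 3 R + 1. *)
lemma sum_child_descendants_le:
  assumes len: "D - length xs = Suc h"
  shows "(\<Sum>y\<in>children_in_range xs j0 R.
           card (descendants (xs @ [y], 0) (R - (attachment (Suc h) y - j0) - 1))) \<le> 4 * R + 1"
    (is "sum ?f ?Y \<le> _")
proof (cases "?Y = {}")
  case False
  have f_le: "?f y \<le> child_size (Suc h)" "?f y \<le> 3 * R + 1" for y
  proof -
    have "length (xs @ [y]) + h = D" using len by simp
    from card_subtree_descendants_le[OF this, of "R - (attachment (Suc h) y - j0) - 1"]
    show "?f y \<le> child_size (Suc h)" "?f y \<le> 3 * R + 1" by (simp_all del: child_size.simps) linarith
  qed
  have fin: "finite ?Y" by (simp add: children_in_range_def)
  define ymax where "ymax = Max ?Y"
  define ymin where "ymin = Min ?Y"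
  have ymax: "ymax \<in> ?Y" and ymin: "ymin \<in> ?Y"
    using False fin Max_in Min_in by (auto simp: ymax_def ymin_def)
  have "?Y - {ymax} \<subseteq> {ymin..<ymax}"
    using fin by (auto simp: ymax_def ymin_def less_le)
  then have card_rest: "card (?Y - {ymax}) \<le> ymax - ymin"
    using card_mono[of "{ymin..<ymax}"] by fastforce
  have "attachment (Suc h) ymax \<le> j0 + R" "j0 \<le> attachment (Suc h) ymin"
    using ymax ymin len by (auto simp: children_in_range_def)
  then have "ymax * child_size (Suc h) - ymin * child_size (Suc h) \<le> R"
    by (simp add: attachment_def algebra_simps del: child_size.simps)
  then have spread: "(ymax - ymin) * child_size (Suc h) \<le> R"
    by (simp add: diff_mult_distrib del: child_size.simps)
  have "sum ?f ?Y = ?f ymax + sum ?f (?Y - {ymax})"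
    using fin ymax by (rule sum.remove)
  also have "sum ?f (?Y - {ymax}) \<le> card (?Y - {ymax}) * child_size (Suc h)"
    using sum_mono[of "?Y - {ymax}" ?f "\<lambda>_. child_size (Suc h)"] f_le(1)
    by (simp del: child_size.simps)
  also have "\<dots> \<le> (ymax - ymin) * child_size (Suc h)"
    using card_rest by (rule mult_le_mono1)
  finally show ?thesis using spread f_le(2)[of ymax] by linarith
qed simp

lemma card_descendants_linear:
  assumes len: "length xs \<le> D"
  shows "card (descendants (xs, j0) R) \<le> 5 * R + 2"
proof (cases "D - length xs")
  case 0
  then show ?thesis using card_descendants_le_child_size[of xs 0 j0 R] len by simp
next
  case (Suc h)
  then show ?thesis
    using card_descendants_le_sum[of xs j0 R, unfolded Suc] sum_child_descendants_le[OF Suc, of R j0]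
      min.cobounded1[of "R + 1" "spine_length (Suc h)"] by linarith
qed

lemma descendants_mono: "R \<le> R' \<Longrightarrow> descendants a R \<subseteq> descendants a R'"
  unfolding descendants_def using le_trans by blast

lemma descendants_up: "z \<in> descendants a R \<Longrightarrow> z \<in> descendants (up a) (Suc R)"
  unfolding descendants_def by (auto intro: exI[of _ "Suc _"])

lemma descendants_funpow_up: "z \<in> descendants a R \<Longrightarrow> z \<in> descendants ((up ^^ m) a) (R + m)"
  by (induction m) (auto dest: descendants_up)

lemma up_in_descendants: "z \<in> descendants a R \<Longrightarrow> up z \<in> descendants (up a) (Suc R)"
proof -
  assume "z \<in> descendants a R"
  then obtain j where j: "j \<le> R" "(up ^^ j) z = a" and z: "z \<in> nodes" by (auto simp: descendants_def)
  show ?thesis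
  proof (cases j)
    case 0
    then show ?thesis using j z up_nodes by (auto simp: descendants_def)
  next
    case (Suc j')
    then have "up z \<in> descendants a R"
      using j z up_nodes unfolding descendants_def by (auto simp: funpow_swap1 intro!: exI[of _ j'])
    then show ?thesis by (rule descendants_up)
  qed
qed

lemma child_in_descendants:
  "z \<in> descendants a R \<Longrightarrow> z' \<in> nodes \<Longrightarrow> up z' = z \<Longrightarrow> z' \<in> descendants a (Suc R)"
  unfolding descendants_def by (auto simp: funpow_swap1 intro: exI[of _ "Suc _"])

lemma descendants_step:
  assumes "z \<in> descendants a R" "z' \<in> nodes" "z' = z \<or> up z = z' \<or> up z' = z"
  shows "z' \<in> descendants (up a) (Suc (Suc R))"
  using assms(3)
proof (elim disjE)
  assume "z' = z"
  then show ?thesis using descendants_up[OF assms(1)] descendants_mono[of "Suc R" "Suc (Suc R)" "up a"] by auto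
next
  assume "up z = z'"
  then show ?thesis using up_in_descendants[OF assms(1)] descendants_mono[of "Suc R" "Suc (Suc R)" "up a"] by auto
next
  assume "up z' = z"
  then show ?thesis using descendants_up[OF child_in_descendants[OF assms(1,2)]] by simp
qed

(* The host graph: the strong product of the tree with edges {z, up z} and the complete graph
   on {..<k}. *)
definition host_vertices :: "nat \<Rightarrow> ((nat list \<times> nat) \<times> nat) set" where
  "host_vertices k = nodes \<times> {..<k}"

definition host_adj :: "(nat list \<times> nat) \<times> nat \<Rightarrow> (nat list \<times> nat) \<times> nat \<Rightarrow> bool" where
  "host_adj x y \<longleftrightarrow> x \<noteq> y \<and> (fst x = fst y \<or> up (fst x) = fst y \<or> up (fst y) = fst x)"

definition host_edges :: "nat \<Rightarrow> ((nat list \<times> nat) \<times> nat) set set" where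
  "host_edges k = {{x, y} | x y. x \<in> host_vertices k \<and> y \<in> host_vertices k \<and> host_adj x y}"

lemma host_edgesI: "x \<in> host_vertices k \<Longrightarrow> y \<in> host_vertices k \<Longrightarrow> host_adj x y \<Longrightarrow> {x, y} \<in> host_edges k"
  unfolding host_edges_def by blast

lemma graph_host: "graph (host_vertices k) (host_edges k)"
proof -
  have "\<exists>u v. e = {u, v} \<and> u \<noteq> v \<and> u \<in> host_vertices k \<and> v \<in> host_vertices k"
    if "e \<in> host_edges k" for e
    using that unfolding host_edges_def host_adj_def by blast
  then show ?thesis using finite_nodes by (simp add: graph_def host_vertices_def)
qed

lemma host_walk_descendants:
  assumes walk: "walk (host_vertices k) (host_edges k) xs"
  shows "i < length xs \<Longrightarrow> fst (xs ! i) \<in> descendants ((up ^^ i) (fst (hd xs))) (2 * i)"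
proof (induction i)
  case 0
  then have "xs ! 0 \<in> host_vertices k" using walk by (auto simp: walk_def)
  then show ?case using 0 by (auto simp: descendants_def host_vertices_def hd_conv_nth intro: exI[of _ 0])
next
  case (Suc i)
  then have "{xs ! i, xs ! Suc i} \<in> host_edges k" and "xs ! Suc i \<in> host_vertices k"
    using walk by (auto simp: walk_def)
  then have "fst (xs ! Suc i) \<in> nodes"
    and "fst (xs ! Suc i) = fst (xs ! i) \<or> up (fst (xs ! i)) = fst (xs ! Suc i) \<or>
         up (fst (xs ! Suc i)) = fst (xs ! i)"
    by (auto simp: host_edges_def host_vertices_def host_adj_def doubleton_eq_iff)
  from descendants_step[OF Suc.IH[OF Suc_lessD[OF Suc.prems]] this]
  show ?case by simp
qed

lemma card_host_ball_le:
  assumes c: "c \<in> host_vertices k"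
  shows "card {v. dist_le (host_vertices k) (host_edges k) c v r} \<le> k * (10 * r + 2)"
proof -
  let ?a = "(up ^^ r) (fst c)"
  have "{v. dist_le (host_vertices k) (host_edges k) c v r} \<subseteq> descendants ?a (2 * r) \<times> {..<k}"
  proof
    fix v assume "v \<in> {v. dist_le (host_vertices k) (host_edges k) c v r}"
    then obtain xs where xs: "walk (host_vertices k) (host_edges k) xs" "hd xs = c" "last xs = v"
      "length xs \<le> Suc r"
      by (auto simp: dist_le_def)
    define i where "i = length xs - 1"
    have i: "i < length xs" "i \<le> r" "xs ! i = v"
      using xs by (auto simp: i_def walk_def last_conv_nth)
    have "fst v \<in> descendants ((up ^^ (r - i)) ((up ^^ i) (fst c))) (2 * i + (r - i))"
      using descendants_funpow_up host_walk_descendants[OF xs(1) i(1)] i(3) xs(2) by simp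
    also have "(up ^^ (r - i)) ((up ^^ i) (fst c)) = (up ^^ (r - i + i)) (fst c)"
      by (simp add: funpow_add)
    also have "r - i + i = r" using i(2) by simp
    finally have "fst v \<in> descendants ?a (2 * r)"
      using descendants_mono[of "2 * i + (r - i)" "2 * r" ?a] i(2) by auto
    moreover have "v \<in> host_vertices k" using xs(1,3) dist_le_in_vertices by (auto simp: walk_def)
    ultimately show "v \<in> descendants ?a (2 * r) \<times> {..<k}"
      by (auto simp: host_vertices_def mem_Times_iff)
  qed
  then have "card {v. dist_le (host_vertices k) (host_edges k) c v r} \<le> card (descendants ?a (2 * r)) * k"
    using card_mono[OF _ \<open>_ \<subseteq> _\<close>] finite_descendants by (simp add: card_cartesian_product)
  also have "card (descendants ?a (2 * r)) \<le> 10 * r + 2"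
  proof -
    have "?a \<in> nodes" using c funpow_up_nodes by (auto simp: host_vertices_def)
    then show ?thesis using card_descendants_linear[of "fst ?a" "snd ?a" "2 * r"] by (auto simp: nodes_def)
  qed
  finally show ?thesis by (simp add: mult.commute)
qed

end

section \<open>Modelling a tree decomposition in the host graph\<close>

locale decomposition_in_spine_tree = rooted_tree I F root + spine_tree N D
  for I :: "nat set" and F root N D +
  fixes V :: "'a set" and E :: "'a set set" and B :: "nat \<Rightarrow> 'a set" and k :: nat
  assumes graph_VE: "graph V E"
    and decomposition: "tree_decomposition V E I F B"
    and card_bags: "\<And>t. t \<in> I \<Longrightarrow> card (B t) \<le> k"
    and tree_nodes_less: "\<And>t. t \<in> I \<Longrightarrow> t < N"
    and depth_le_height: "\<And>t. t \<in> I \<Longrightarrow> depth t \<le> D"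
begin

definition bag_index :: "nat \<Rightarrow> 'a \<Rightarrow> nat" where
  "bag_index t = (SOME f. inj_on f (B t) \<and> f ` B t \<subseteq> {..<k})"

(* The spine of the tree node t is the one at address root_path t. *)
definition branch_set :: "'a \<Rightarrow> ((nat list \<times> nat) \<times> nat) set" where
  "branch_set v = {((root_path t, j), bag_index t v) | t j.
     t \<in> I \<and> v \<in> B t \<and> j < spine_length (D - depth t)}"

definition anchor :: "'a \<Rightarrow> nat \<Rightarrow> (nat list \<times> nat) \<times> nat" where
  "anchor v t = ((root_path t, 0), bag_index t v)"

lemma bag_index: "t \<in> I \<Longrightarrow> inj_on (bag_index t) (B t) \<and> bag_index t ` B t \<subseteq> {..<k}"
proof -
  assume t: "t \<in> I"
  have "B t \<subseteq> V" using decomposition t by (simp add: tree_decomposition_def)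
  moreover have "finite V" using graph_VE by (simp add: graph_def)
  ultimately have "finite (B t)" by (rule finite_subset)
  then obtain f :: "'a \<Rightarrow> nat" and n where f: "f ` B t = {i. i < n}" "inj_on f (B t)"
    using finite_imp_inj_to_nat_seg[OF \<open>finite (B t)\<close>] by blast
  have "n = card (B t)" using f card_image[OF f(2)] by simp
  then have "n \<le> k" using card_bags[OF t] by simp
  then have "f ` B t \<subseteq> {..<k}" using f(1) by auto
  then have "\<exists>f. inj_on f (B t) \<and> f ` B t \<subseteq> {..<k}" using f(2) by blast
  then show ?thesis unfolding bag_index_def by (rule someI_ex)
qed

lemma root_path_node: "t \<in> I \<Longrightarrow> j < spine_length (D - depth t) \<Longrightarrow> (root_path t, j) \<in> nodes"
  using set_root_path[of t] depth_le_height[of t] tree_nodes_less by (auto simp: nodes_def)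

lemma branch_set_subset: "branch_set v \<subseteq> host_vertices k"
proof
  fix x assume "x \<in> branch_set v"
  then obtain t j where x: "x = ((root_path t, j), bag_index t v)" "t \<in> I" "v \<in> B t"
    "j < spine_length (D - depth t)"
    unfolding branch_set_def by blast
  then show "x \<in> host_vertices k"
    using root_path_node[OF x(2,4)] bag_index[OF x(2)] by (auto simp: host_vertices_def)
qed

lemma anchor_in_branch_set: "t \<in> I \<Longrightarrow> v \<in> B t \<Longrightarrow> anchor v t \<in> branch_set v"
  unfolding anchor_def branch_set_def by (auto simp: spine_length_def)

lemma up_root_path:
  assumes "t \<in> I" "t \<noteq> root"
  shows "up (root_path t, 0) = (root_path (parent t), attachment (D - depth (parent t)) t)"
proof -
  have "depth (parent t) + 1 = depth t" using parent[OF assms] by simp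
  then have "D - length (root_path t) + 1 = D - depth (parent t)"
    using depth_le_height[OF assms(1)] by simp
  then show ?thesis using root_path_parent[OF assms] by (simp add: up_def)
qed

lemma branch_set_adj:
  "x \<in> branch_set v \<Longrightarrow> y \<in> branch_set v \<Longrightarrow> host_adj x y \<Longrightarrow>
     adj_within (branch_set v) (host_edges k) x y"
  unfolding adj_within_def using branch_set_subset host_edgesI by blast

lemma spine_connected_to_anchor:
  assumes t: "t \<in> I" "v \<in> B t"
  shows "j < spine_length (D - depth t) \<Longrightarrow>
    (adj_within (branch_set v) (host_edges k))\<^sup>*\<^sup>* ((root_path t, j), bag_index t v) (anchor v t)"
proof (induction j)
  case 0
  then show ?case by (simp add: anchor_def)
next
  case (Suc j)
  let ?x = "((root_path t, Suc j), bag_index t v)" and ?y = "((root_path t, j), bag_index t v)"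
  have "?x \<in> branch_set v" "?y \<in> branch_set v" using t Suc.prems by (auto simp: branch_set_def)
  moreover have "host_adj ?x ?y" by (simp add: host_adj_def up_def)
  ultimately have "adj_within (branch_set v) (host_edges k) ?x ?y" by (rule branch_set_adj)
  with Suc show ?case by (meson Suc_lessD converse_rtranclp_into_rtranclp)
qed

lemma anchor_connected_to_parent:
  assumes t: "t \<in> I" "t \<noteq> root" and v: "v \<in> B t" "v \<in> B (parent t)"
  shows "(adj_within (branch_set v) (host_edges k))\<^sup>*\<^sup>* (anchor v t) (anchor v (parent t))"
proof -
  let ?p = "parent t"
  let ?j = "attachment (D - depth ?p) t"
  let ?y = "((root_path ?p, ?j), bag_index ?p v)"
  have p: "?p \<in> I" "depth ?p + 1 = depth t" using parent[OF t] by auto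
  have "up (root_path t, 0) \<in> nodes"
    using up_nodes root_path_node[OF t(1)] by (simp add: spine_length_def)
  then have j: "?j < spine_length (D - depth ?p)"
    by (simp add: up_root_path[OF t] nodes_def)
  then have "?y \<in> branch_set v" using p(1) v(2) unfolding branch_set_def by blast
  moreover have "root_path t \<noteq> root_path ?p" using p(2) by (metis length_root_path n_not_Suc_n Suc_eq_plus1)
  then have "host_adj (anchor v t) ?y" by (simp add: host_adj_def anchor_def up_root_path[OF t])
  ultimately have "adj_within (branch_set v) (host_edges k) (anchor v t) ?y"
    using branch_set_adj anchor_in_branch_set[OF t(1) v(1)] by blast
  moreover have "(adj_within (branch_set v) (host_edges k))\<^sup>*\<^sup>* ?y (anchor v ?p)"
    using spine_connected_to_anchor[OF p(1) v(2) j] .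
  ultimately show ?thesis by (rule converse_rtranclp_into_rtranclp)
qed

lemma branch_set_connected:
  assumes v: "v \<in> V"
  shows "connected_within (branch_set v) (host_edges k)"
proof -
  let ?R = "adj_within (branch_set v) (host_edges k)"
  define T where "T = {t \<in> I. v \<in> B t}"
  have tree_edge: "?R\<^sup>*\<^sup>* (anchor v a) (anchor v b)"
    if ab_adj: "adj_within T {e \<in> F. e \<subseteq> T} a b" for a b
  proof -
    have ab: "{a, b} \<in> F" "a \<in> T" "b \<in> T" using ab_adj by (auto simp: adj_within_def)
    then obtain t where t: "t \<in> I" "t \<noteq> root" "{a, b} = {t, parent t}"
      using edge_eq_parent_edge by blast
    have "?R\<^sup>*\<^sup>* (anchor v t) (anchor v (parent t))"
      using anchor_connected_to_parent[OF t(1,2)] ab t(3) by (auto simp: T_def doubleton_eq_iff)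
    moreover have "symp ?R\<^sup>*\<^sup>*" by (rule symp_rtranclp[OF symp_adj_within])
    ultimately show ?thesis using t(3) by (auto simp: doubleton_eq_iff dest: sympD)
  qed
  have "connected_within T {e \<in> F. e \<subseteq> T}"
    using decomposition v by (simp add: tree_decomposition_def T_def connected_within_if_connected_graph)
  then have anchors: "?R\<^sup>*\<^sup>* (anchor v a) (anchor v b)" if "a \<in> T" "b \<in> T" for a b
    using rtranclp_map_steps[of "adj_within T {e \<in> F. e \<subseteq> T}" ?R "anchor v", OF tree_edge] that
    by (simp add: connected_within_def)
  have to_anchor: "\<exists>t\<in>T. ?R\<^sup>*\<^sup>* x (anchor v t) \<and> ?R\<^sup>*\<^sup>* (anchor v t) x"
    if x_in: "x \<in> branch_set v" for x
  proof -
    obtain t j where x: "x = ((root_path t, j), bag_index t v)" "t \<in> I" "v \<in> B t"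
      "j < spine_length (D - depth t)"
      using x_in unfolding branch_set_def by blast
    then have "?R\<^sup>*\<^sup>* x (anchor v t)" using spine_connected_to_anchor by simp
    moreover have "symp ?R\<^sup>*\<^sup>*" by (rule symp_rtranclp[OF symp_adj_within])
    ultimately show ?thesis using x by (auto simp: T_def dest: sympD)
  qed
  show ?thesis
    unfolding connected_within_def by (meson anchors to_anchor rtranclp_trans)
qed

lemma branch_sets_disjoint:
  assumes "u \<noteq> v"
  shows "branch_set u \<inter> branch_set v = {}"
proof (rule ccontr)
  assume "branch_set u \<inter> branch_set v \<noteq> {}"
  then obtain t j t' j' where x: "t \<in> I" "u \<in> B t" and y: "t' \<in> I" "v \<in> B t'"
    and eq: "((root_path t, j), bag_index t u) = ((root_path t', j'), bag_index t' v)"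
    unfolding branch_set_def by blast
  then have "t = t'" using root_path_inj by simp
  then have "u = v" using eq bag_index[OF x(1)] x(2) y(2) by (auto dest: inj_onD)
  then show False using assms by simp
qed

lemma branch_sets_adjacent:
  assumes "{u, v} \<in> E"
  shows "\<exists>p\<in>branch_set u. \<exists>q\<in>branch_set v. {p, q} \<in> host_edges k"
proof -
  have "u \<noteq> v" using graph_edgeD[OF graph_VE assms] by simp
  obtain t where t: "t \<in> I" "u \<in> B t" "v \<in> B t" using decomposition assms by (auto simp: tree_decomposition_def)
  then have "bag_index t u \<noteq> bag_index t v" using bag_index[OF t(1)] \<open>u \<noteq> v\<close> by (auto dest: inj_onD)
  then have "host_adj (anchor u t) (anchor v t)" by (simp add: host_adj_def anchor_def)
  moreover have "anchor u t \<in> branch_set u" "anchor v t \<in> branch_set v"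
    using anchor_in_branch_set t by auto
  ultimately show ?thesis using branch_set_subset host_edgesI by blast
qed

lemma minor_model_host: "minor_model V E (host_vertices k) (host_edges k) branch_set"
proof -
  have "branch_set v \<noteq> {}" if "v \<in> V" for v
    using decomposition that anchor_in_branch_set by (fastforce simp: tree_decomposition_def)
  then show ?thesis
    unfolding minor_model_def
    using branch_set_subset branch_set_connected branch_sets_disjoint branch_sets_adjacent by blast
qed

end

lemma tree_decomposition_bounded_bags:
  assumes "graph V E" and "treewidth V E < int k"
  obtains I F B where "tree_decomposition V E I F B" and "\<forall>i\<in>I. card (B i) \<le> k"
proof -
  let ?P = "\<lambda>w. \<exists>I F B. tree_decomposition V E I F B \<and> (\<forall>i\<in>I. card (B i) \<le> w)"
  have "tree_decomposition V E {0} {} (\<lambda>_. V)"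
    using assms(1) unfolding tree_decomposition_def tree_def graph_def connected_graph_def walk_def
    by (auto intro!: exI[of _ "[0::nat]"])
  then have "?P (card V)" by blast
  then have "?P (LEAST w. ?P w)" by (rule LeastI)
  moreover have "(LEAST w. ?P w) \<le> k" using assms(2) by (simp add: treewidth_def)
  ultimately show ?thesis using that order_trans by meson
qed

theorem minor_of_linear_growth_host:
  fixes V :: "'a set" and E :: "'a set set"
  assumes gV: "graph V E" and td: "tree_decomposition V E I F B" and bags: "\<forall>i\<in>I. card (B i) \<le> k"
  shows "\<exists>(VT :: nat set) ET. graph VT ET \<and> minor V E VT ET \<and>
           (\<forall>r. growth VT ET r \<le> k * (10 * r + 2))"
proof -
  have tree: "tree I F" using td by (simp add: tree_decomposition_def)
  then obtain root where root: "root \<in> I" by (fastforce simp: tree_def)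
  interpret T: rooted_tree I F root using tree root by unfold_locales
  have finI: "finite I" using T.graph by (simp add: graph_def)
  interpret decomposition_in_spine_tree I F root "Suc (Max I)" "Max (T.depth ` I)" V E B k
    using gV td bags finI by unfold_locales (auto simp: le_imp_less_Suc)
  let ?VT = "to_nat ` host_vertices k" and ?ET = "map_edges to_nat (host_edges k)"
  have inj: "inj_on to_nat (host_vertices k)" by (simp add: inj_on_def)
  have "graph ?VT ?ET" using graph_host by (rule graph_map_edges)
  moreover have "minor V E ?VT ?ET"
    using minor_model_map_edges[OF graph_host inj minor_model_host]
    by (rule minor_if_minor_model[OF gV \<open>graph ?VT ?ET\<close>])
  moreover have "growth ?VT ?ET r \<le> k * (10 * r + 2)" for r
    using graph_host inj card_host_ball_le by (rule growth_map_edges_le)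
  ultimately show ?thesis by blast
qed

theorem corollary18:
  fixes k :: nat and \<epsilon> :: real and V :: "'a set" and E :: "'a set set"
  assumes "k > 0" and "\<epsilon> > 0"
    and "graph V E" and "treewidth V E < int k"
  shows "\<exists>(VT :: nat set) ET. graph VT ET \<and> minor V E VT ET \<and>
           (\<forall>r::nat. r > 0 \<longrightarrow> real (growth VT ET r) \<le> (162 * (real k + 1) + \<epsilon>) * real r + 1)"
proof -
  obtain I F B where "tree_decomposition V E I F B" "\<forall>i\<in>I. card (B i) \<le> k"
    using tree_decomposition_bounded_bags[OF assms(3,4)] .
  then obtain VT :: "nat set" and ET where host: "graph VT ET" "minor V E VT ET"
    and growth: "\<And>r. growth VT ET r \<le> k * (10 * r + 2)"
    using minor_of_linear_growth_host[OF assms(3)] by blast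
  have "real (growth VT ET r) \<le> (162 * (real k + 1) + \<epsilon>) * real r + 1" if "r > 0" for r
  proof -
    have "real (growth VT ET r) \<le> real k * (10 * real r + 2)"
      using growth[of r] of_nat_le_iff[of _ "k * (10 * r + 2)", where 'a=real]
      by (simp add: algebra_simps)
    also have "\<dots> \<le> real k * (12 * real r)"
      using that by (intro mult_left_mono) auto
    also have "\<dots> \<le> 162 * (real k + 1) * real r" by (simp add: algebra_simps)
    also have "\<dots> \<le> (162 * (real k + 1) + \<epsilon>) * real r + 1"
      using assms(2) by (simp add: distrib_right)
    finally show ?thesis .
  qed
  then show ?thesis using host by blast
qed

end
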